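(* In a finite dynamic game as described in the context, let $K=(K^i)_{i\in\mathcal{I}}$ be compressed information such that for every player $i$, $K^i$ is unilaterally sufficient information for player $i$. Then the set of payoff profiles $(J^i(\rho))_{i\in\mathcal{I}}$ attained by $K$-based Bayes–Nash equilibria $\rho$ equals the set of payoff profiles $(J^i(g))_{i\in\mathcal{I}}$ attained by all Bayes–Nash equilibria $g$ (in behavioral strategies with perfect recall).
   Context: Game model: finite set of players $\mathcal{I}$, times $\mathcal{T}=\{1,\dots,T\}$. At time $t$ each player $i$ takes action $U_t^i\in\mathcal{U}_t^i$, obtains reward $R_t^i\in[-1,1]$ and learns new information $Z_t^i\in\mathcal{Z}_t^i$. There is a state $X_t\in\mathcal{X}_t$ with $(X_{t+1},Z_t,R_t)=f_t(X_t,U_t,W_t)$ for fixed functions $f_t$. The primitive random variables are $(X_1,H_1)$ (with $H_1=(H_1^i)_i$ initial information, possibly correlated with $X_1$) and $W_1,\dots,W_T$, mutually independent with commonly known distributions. All sets $\mathcal{X}_t,\mathcal{U}_t,\mathcal{Z}_t,\mathcal{W}_t,\mathcal{H}_1$ are finite. Perfect recall: $H_t^i=(H_1^i,Z_{1:t-1}^i)\in\mathcal{H}_t^i$, and $U_t^i$ is a component of $Z_t^i$. Behavioral strategy $g^i=(g_t^i)_t$, $g_t^i:\mathcal{H}_t^i\to\Delta(\mathcal{U}_t^i)$; payoff $J^i(g)=\mathbb{E}^g[\sum_t R_t^i]$. A profile $g$ is a Bayes–Nash equilibrium (BNE) if $J^i(g)\ge J^i(\tilde g^i,g^{-i})$ for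 all $i$ and all behavioral $\tilde g^i$. A realization is admissible under $g$ if it has positive probability under $g$. Compression: $K_1^i=\iota_1^i(H_1^i)$, $K_t^i=\iota_t^i(K_{t-1}^i,Z_{t-1}^i)$ for fixed maps, values in finite $\mathcal{K}_t^i$; $k_t^i$ is the compression of $h_t^i$. A $K^i$-based strategy has $\rho_t^i:\mathcal{K}_t^i\to\Delta(\mathcal{U}_t^i)$; a $K$-based BNE is a BNE (against all full-history deviations) in which every player uses a $K^i$-based strategy. Unilaterally sufficient information (USI): $K^i$ is USI for player $i$ if there exist functions $F_t^{i,g^i}:\mathcal{K}_t^i\to\Delta(\mathcal{H}_t^i)$ depending only on $g^i$ and $\Phi_t^{i,g^{-i}}:\mathcal{K}_t^i\to\Delta(\mathcal{X}_t\times\mathcal{H}_t^{-i})$ depending only on $g^{-i}$ such that $\Pr^g(x_t,h_t\mid k_t^i)=F_t^{i,g^i}(h_t^i\mid k_t^i)\,\Phi_t^{i,g^{-i}}(x_t,h_t^{-i}\mid k_t^i)$ for all behavioral profiles $g$, all $t$ and all $k_t^i$ admissible under $g$ (here $x_t,h_t^i,h_t^{-i}$ range independently over their sets; if they disagree on shared components the left side is $0$). *)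

theory Defs
  imports "HOL-Probability.Probability"
begin

text \<open>
Types: players 'i, states 'x, actions 'u, (non-action part of)
new information 'y, noise 'w, initial private information 'h, compressed information 'k.
The new information of player i at time t is Z_t^i = (U_t^i, Y_t^i), so that the own
action is a component of Z_t^i. A local history of player i at time t is
H_t^i = (H_1^i, [Z_1^i, ..., Z_{t-1}^i]).

Game data:
  init :: ('x * ('i => 'h)) pmf     joint law of (X_1, H_1)
  W    :: nat => 'w pmf             law of W_t (W_1,...,W_T independent of each other and of (X_1,H_1))
  f    :: nat => 'x => ('i => 'u) => 'w => 'x * ('i => 'y) * ('i => real)
                                    (X_{t+1}, Y_t, R_t) = f_t(X_t, U_t, W_t)
  U    :: nat => 'i => 'u set       action sets U_t^i
  T    :: nat                       horizon
\<close>

type_synonym ('h,'u,'y) hist = "'h \<times> ('u \<times> 'y) list"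

type_synonym ('h,'u,'y) bstrat = "nat \<Rightarrow> ('h,'u,'y) hist \<Rightarrow> 'u pmf"

definition valid_strat ::
  "(nat \<Rightarrow> 'i \<Rightarrow> 'u set) \<Rightarrow> nat \<Rightarrow> 'i \<Rightarrow> ('h,'u,'y) bstrat \<Rightarrow> bool" where
  "valid_strat U T i s \<longleftrightarrow> (\<forall>t\<in>{1..T}. \<forall>hh. set_pmf (s t hh) \<subseteq> U t i)"

definition valid_profile ::
  "(nat \<Rightarrow> 'i \<Rightarrow> 'u set) \<Rightarrow> nat \<Rightarrow> ('i \<Rightarrow> ('h,'u,'y) bstrat) \<Rightarrow> bool" where
  "valid_profile U T g \<longleftrightarrow> (\<forall>i. valid_strat U T i (g i))"

definition game_step ::
  "(nat \<Rightarrow> 'w pmf) \<Rightarrow> (nat \<Rightarrow> 'x \<Rightarrow> ('i \<Rightarrow> 'u) \<Rightarrow> 'w \<Rightarrow> 'x \<times> ('i \<Rightarrow> 'y) \<times> ('i \<Rightarrow> real))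
   \<Rightarrow> ('i::finite \<Rightarrow> ('h,'u,'y) bstrat) \<Rightarrow> nat
   \<Rightarrow> 'x \<times> ('i \<Rightarrow> ('h,'u,'y) hist) \<times> ('i \<Rightarrow> real)
   \<Rightarrow> ('x \<times> ('i \<Rightarrow> ('h,'u,'y) hist) \<times> ('i \<Rightarrow> real)) pmf" where
  "game_step W f g t s =
     (case s of (x, h, r) \<Rightarrow>
        bind_pmf (Pi_pmf UNIV undefined (\<lambda>i. g i t (h i))) (\<lambda>u.
        bind_pmf (W t) (\<lambda>w.
          (case f t x u w of (x', y, rr) \<Rightarrow>
             return_pmf (x', (\<lambda>i. (fst (h i), snd (h i) @ [(u i, y i)])), (\<lambda>i. r i + rr i))))))"

text \<open>\<open>game_run init W f g n\<close> is the law of the game state at time n+1 (before acting),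
  i.e. of (X_{n+1}, H_{n+1}, R_1 + ... + R_n).\<close>
primrec game_run ::
  "('x \<times> ('i \<Rightarrow> 'h)) pmf \<Rightarrow> (nat \<Rightarrow> 'w pmf)
   \<Rightarrow> (nat \<Rightarrow> 'x \<Rightarrow> ('i \<Rightarrow> 'u) \<Rightarrow> 'w \<Rightarrow> 'x \<times> ('i \<Rightarrow> 'y) \<times> ('i \<Rightarrow> real))
   \<Rightarrow> ('i::finite \<Rightarrow> ('h,'u,'y) bstrat) \<Rightarrow> nat
   \<Rightarrow> ('x \<times> ('i \<Rightarrow> ('h,'u,'y) hist) \<times> ('i \<Rightarrow> real)) pmf" where
  "game_run init W f g 0 = map_pmf (\<lambda>(x, h1). (x, (\<lambda>i. (h1 i, [])), (\<lambda>i. 0))) init"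
| "game_run init W f g (Suc n) = bind_pmf (game_run init W f g n) (game_step W f g (Suc n))"

text \<open>Law of (X_t, H_t) at time t >= 1.\<close>
definition state_dist where
  "state_dist init W f g t = map_pmf (\<lambda>(x, h, r). (x, h)) (game_run init W f g (t - 1))"

definition payoff where
  "payoff init W f T g i = measure_pmf.expectation (game_run init W f g T) (\<lambda>(x, h, r). r i)"

definition is_BNE where
  "is_BNE init W f U T g \<longleftrightarrow> valid_profile U T g \<and>
     (\<forall>i s. valid_strat U T i s \<longrightarrow> payoff init W f T (g(i := s)) i \<le> payoff init W f T g i)"

text \<open>Compression: K_1^i = iota1 i H_1^i, K_t^i = iota t i K_{t-1}^i Z_{t-1}^i.
  \<open>kacc iota i t k zs\<close> processes Z_t, Z_{t+1}, ... starting from K_t = k.\<close>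
fun kacc :: "(nat \<Rightarrow> 'i \<Rightarrow> 'k \<Rightarrow> ('u \<times> 'y) \<Rightarrow> 'k) \<Rightarrow> 'i \<Rightarrow> nat \<Rightarrow> 'k \<Rightarrow> ('u \<times> 'y) list \<Rightarrow> 'k" where
  "kacc iota i t k [] = k"
| "kacc iota i t k (z # zs) = kacc iota i (Suc t) (iota (Suc t) i k z) zs"

definition compress ::
  "('i \<Rightarrow> 'h \<Rightarrow> 'k) \<Rightarrow> (nat \<Rightarrow> 'i \<Rightarrow> 'k \<Rightarrow> ('u \<times> 'y) \<Rightarrow> 'k) \<Rightarrow> 'i \<Rightarrow> ('h,'u,'y) hist \<Rightarrow> 'k" where
  "compress iota1 iota i hh = kacc iota i 1 (iota1 i (fst hh)) (snd hh)"

definition valid_kprofile ::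
  "(nat \<Rightarrow> 'i \<Rightarrow> 'u set) \<Rightarrow> nat \<Rightarrow> ('i \<Rightarrow> nat \<Rightarrow> 'k \<Rightarrow> 'u pmf) \<Rightarrow> bool" where
  "valid_kprofile U T rho \<longleftrightarrow> (\<forall>i. \<forall>t\<in>{1..T}. \<forall>k. set_pmf (rho i t k) \<subseteq> U t i)"

definition kinduced ::
  "('i \<Rightarrow> 'h \<Rightarrow> 'k) \<Rightarrow> (nat \<Rightarrow> 'i \<Rightarrow> 'k \<Rightarrow> ('u \<times> 'y) \<Rightarrow> 'k)
   \<Rightarrow> ('i \<Rightarrow> nat \<Rightarrow> 'k \<Rightarrow> 'u pmf) \<Rightarrow> 'i \<Rightarrow> ('h,'u,'y) bstrat" where
  "kinduced iota1 iota rho i t hh = rho i t (compress iota1 iota i hh)"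

text \<open>F depends only on g^i;
  Phi depends only on g^{-i} (it gives the same result for profiles that agree off i).
  Phi is a distribution on X_t x H_t^{-i}; the i-th component of the profile of local
  histories is masked to undefined.\<close>
definition USI ::
  "('x \<times> ('i::finite \<Rightarrow> 'h)) pmf \<Rightarrow> (nat \<Rightarrow> 'w pmf)
   \<Rightarrow> (nat \<Rightarrow> 'x \<Rightarrow> ('i \<Rightarrow> 'u) \<Rightarrow> 'w \<Rightarrow> 'x \<times> ('i \<Rightarrow> 'y) \<times> ('i \<Rightarrow> real))
   \<Rightarrow> (nat \<Rightarrow> 'i \<Rightarrow> 'u set) \<Rightarrow> nat \<Rightarrow> ('i \<Rightarrow> 'h \<Rightarrow> 'k)
   \<Rightarrow> (nat \<Rightarrow> 'i \<Rightarrow> 'k \<Rightarrow> ('u \<times> 'y) \<Rightarrow> 'k) \<Rightarrow> 'i \<Rightarrow> bool" where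
  "USI init W f U T iota1 iota i \<longleftrightarrow>
     (\<exists>(F :: ('h,'u,'y) bstrat \<Rightarrow> nat \<Rightarrow> 'k \<Rightarrow> ('h,'u,'y) hist pmf)
       (Phi :: ('i \<Rightarrow> ('h,'u,'y) bstrat) \<Rightarrow> nat \<Rightarrow> 'k \<Rightarrow> ('x \<times> ('i \<Rightarrow> ('h,'u,'y) hist)) pmf).
        (\<forall>g g'. (\<forall>j. j \<noteq> i \<longrightarrow> g j = g' j) \<longrightarrow> Phi g = Phi g') \<and>
        (\<forall>g. valid_profile U T g \<longrightarrow> (\<forall>t\<in>{1..T}. \<forall>k.
           let M = state_dist init W f g t;
               pk = measure_pmf.prob M {(x, h). compress iota1 iota i (h i) = k}
           in pk > 0 \<longrightarrow>
              (\<forall>x h. (if compress iota1 iota i (h i) = k then pmf M (x, h) else 0) / pk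
                     = pmf (F (g i) t k) (h i) * pmf (Phi g t k) (x, h(i := undefined))))))"

end

theory Submission
  imports Defs
begin

text \<open>
  Fix a player i whose compression K^i is unilaterally sufficient, and a profile g. Let i
  switch to the K^i-based strategy that, given K_t^i = k, draws a fictitious history from
  F_t^{i,g^i}(k) and plays g^i on it. By USI the real history of i is, given K_t^i = k,
  distributed according to the same law and independent of (X_t, H_t^{-i}); so by induction
  over time the joint law of (X_t, H_t^{-i}, K_t^i) and the expected stage rewards of all
  players are unchanged. As the new strategy of i depends on g^i only, doing this for all
  players turns a BNE g into a K-based profile with the same payoffs, and a deviation of i
  from it earns what the same deviation from g earns.
\<close>

text \<open>The factorization required by USI, for a single law \<open>M\<close> of (X_t, H_t).\<close>

definition conditionally_factorizes ::
  "('x \<times> ('i \<Rightarrow> 'a)) pmf \<Rightarrow> ('a \<Rightarrow> 'k) \<Rightarrow> 'i \<Rightarrow> 'a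
   \<Rightarrow> ('k \<Rightarrow> 'a pmf) \<Rightarrow> ('k \<Rightarrow> ('x \<times> ('i \<Rightarrow> 'a)) pmf) \<Rightarrow> bool" where
  "conditionally_factorizes M K i c F Phi \<longleftrightarrow>
     (\<forall>k. let pk = measure_pmf.prob M {(x, h). K (h i) = k} in pk > 0 \<longrightarrow>
        (\<forall>x h. (if K (h i) = k then pmf M (x, h) else 0) / pk
               = pmf (F k) (h i) * pmf (Phi k) (x, h(i := c))))"

lemma expectation_bind_pmf_finite:
  fixes p :: "'a pmf" and q :: "'a \<Rightarrow> 'b pmf" and \<phi> :: "'b \<Rightarrow> real"
  assumes "finite (set_pmf p)" and "\<And>x. x \<in> set_pmf p \<Longrightarrow> finite (set_pmf (q x))"
  shows "measure_pmf.expectation (bind_pmf p q) \<phi>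
       = measure_pmf.expectation p (\<lambda>x. measure_pmf.expectation (q x) \<phi>)"
  using assms by (simp add: pmf_expectation_bind[of "set_pmf p"] integral_measure_pmf[of "set_pmf p"])

lemma product_density_imp_pair_pmf:
  fixes N :: "('x \<times> ('i \<Rightarrow> 'a)) pmf"
  assumes density: "\<And>x h. pmf N (x, h) = pmf F (h i) * pmf Phi (x, h(i := c))"
  shows "map_pmf (\<lambda>(x, h). ((x, h(i := c)), h i)) N
         = pair_pmf (map_pmf (\<lambda>(x, h). (x, h(i := c))) N) F"
proof (rule pmf_eqI)
  fix z :: "('x \<times> ('i \<Rightarrow> 'a)) \<times> 'a"
  obtain x h0 a where z: "z = ((x, h0), a)" by (metis prod.collapse)
  show "pmf (map_pmf (\<lambda>(x, h). ((x, h(i := c)), h i)) N) z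
        = pmf (pair_pmf (map_pmf (\<lambda>(x, h). (x, h(i := c))) N) F) z"
  proof (cases "h0 i = c")
    case True
    then have restore: "h0(i := c) = h0" by auto
    have split_inj: "inj (\<lambda>(x, h). ((x, h(i := c)), h i))"
      by (auto simp: inj_def fun_eq_iff split: if_splits)
    have "pmf (map_pmf (\<lambda>(x, h). ((x, h(i := c)), h i)) N) ((x, h0), a) = pmf N (x, h0(i := a))"
      using pmf_map_inj'[OF split_inj, of N "(x, h0(i := a))"] by (simp add: restore)
    also have "\<dots> = pmf F a * pmf Phi (x, h0)"
      by (simp add: density restore)
    also have "pmf Phi (x, h0) = pmf (map_pmf (\<lambda>(x, h). (x, h(i := c))) N) (x, h0)"
    proof -
      have fibre: "(\<lambda>(x, h). (x, h(i := c))) -` {(x, h0)} = range (\<lambda>v. (x, h0(i := v)))"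
        using True by (auto simp: fun_eq_iff image_iff) metis
      have "pmf (map_pmf (\<lambda>(x, h). (x, h(i := c))) N) (x, h0)
            = infsetsum (\<lambda>v. pmf N (x, h0(i := v))) UNIV"
        by (simp add: pmf_map measure_pmf_conv_infsetsum fibre infsetsum_reindex inj_def fun_eq_iff)
      also have "\<dots> = infsetsum (\<lambda>v. pmf F v * pmf Phi (x, h0)) UNIV"
        by (simp add: density restore)
      also have "\<dots> = pmf Phi (x, h0)"
        by (subst infsetsum_cmult_left) (auto simp: infsetsum_pmf_eq_1)
      finally show ?thesis by simp
    qed
    finally show ?thesis
      unfolding z pmf_pair by (simp only: mult.commute)
  next
    case False
    have "pmf (map_pmf (\<lambda>(x, h). ((x, h(i := c)), h i)) N) z = 0"
      by (rule pmf_map_outside) (use False in \<open>auto simp: z\<close>)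
    moreover have "pmf (map_pmf (\<lambda>(x, h). (x, h(i := c))) N) (x, h0) = 0"
      by (rule pmf_map_outside) (use False in auto)
    ultimately show ?thesis
      by (simp add: z pmf_pair)
  qed
qed

lemma bind_pmf_resample_component:
  fixes M :: "('x \<times> ('i \<Rightarrow> 'a)) pmf"
    and \<Psi> :: "'x \<times> ('i \<Rightarrow> 'a) \<Rightarrow> 'k \<Rightarrow> 'a \<Rightarrow> 'z pmf"
  assumes "conditionally_factorizes M K i c F Phi"
  shows "bind_pmf M (\<lambda>(x, h). \<Psi> (x, h(i := c)) (K (h i)) (h i))
       = bind_pmf M (\<lambda>(x, h). bind_pmf (F (K (h i))) (\<Psi> (x, h(i := c)) (K (h i))))"
proof -
  define \<kappa> where "\<kappa> s = K (snd s i)" for s :: "'x \<times> ('i \<Rightarrow> 'a)"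
  define mask where "mask s = (fst s, (snd s)(i := c))" for s :: "'x \<times> ('i \<Rightarrow> 'a)"
  define N where "N k = cond_pmf M {s. \<kappa> s = k}" for k
  have bind_by_\<kappa>: "bind_pmf M \<Theta> = bind_pmf (map_pmf \<kappa> M) (\<lambda>k. bind_pmf (N k) \<Theta>)"
    for \<Theta> :: "_ \<Rightarrow> 'z pmf"
  proof -
    have "M = bind_pmf (map_pmf \<kappa> M) N"
      unfolding N_def by (rule bind_cond_pmf_cancel[symmetric]) (auto simp: vimage_def)
    then show ?thesis
      by (metis bind_assoc_pmf)
  qed
  have "bind_pmf (N k) (\<lambda>s. \<Psi> (mask s) (\<kappa> s) (snd s i))
        = bind_pmf (N k) (\<lambda>s. bind_pmf (F (\<kappa> s)) (\<Psi> (mask s) (\<kappa> s)))"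
    if k: "k \<in> set_pmf (map_pmf \<kappa> M)" for k
  proof -
    have nonempty: "set_pmf M \<inter> {s. \<kappa> s = k} \<noteq> {}" using k by auto
    have fibre: "{s. \<kappa> s = k} = {(x, h). K (h i) = k}"
      by (auto simp: \<kappa>_def)
    have "measure_pmf.prob M {(x, h). K (h i) = k} > 0"
      using nonempty unfolding fibre by (auto intro: measure_pmf_posI)
    with assms have factor: "(if K (h i) = k then pmf M (x, h) else 0)
        / measure_pmf.prob M {(x, h). K (h i) = k} = pmf (F k) (h i) * pmf (Phi k) (x, h(i := c))"
      for x h unfolding conditionally_factorizes_def Let_def by blast
    have density: "pmf (N k) (x, h) = pmf (F k) (h i) * pmf (Phi k) (x, h(i := c))" for x h
      using factor[of h x] unfolding N_def pmf_cond[OF nonempty] unfolding fibre by auto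
    have pair: "map_pmf (\<lambda>s. (mask s, snd s i)) (N k) = pair_pmf (map_pmf mask (N k)) (F k)"
      using product_density_imp_pair_pmf[OF density] by (simp add: mask_def[abs_def] case_prod_beta')
    have on_fibre: "\<kappa> s = k" if "s \<in> set_pmf (N k)" for s
      using that nonempty by (auto simp: N_def)
    have "bind_pmf (N k) (\<lambda>s. \<Psi> (mask s) (\<kappa> s) (snd s i))
          = bind_pmf (map_pmf (\<lambda>s. (mask s, snd s i)) (N k)) (\<lambda>(p, a). \<Psi> p k a)"
      by (auto simp: bind_map_pmf on_fibre intro: bind_pmf_cong)
    also have "\<dots> = bind_pmf (map_pmf mask (N k)) (\<lambda>p. bind_pmf (F k) (\<Psi> p k))"
      by (simp add: pair pair_pmf_def bind_assoc_pmf bind_return_pmf)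
    also have "\<dots> = bind_pmf (N k) (\<lambda>s. bind_pmf (F (\<kappa> s)) (\<Psi> (mask s) (\<kappa> s)))"
      by (auto simp: bind_map_pmf on_fibre intro: bind_pmf_cong)
    finally show ?thesis .
  qed
  then show ?thesis
    unfolding bind_by_\<kappa> by (auto simp: \<kappa>_def mask_def case_prod_beta' intro: bind_pmf_cong)
qed

lemma kacc_snoc: "kacc iota i t k (zs @ [z]) = iota (t + length zs + 1) i (kacc iota i t k zs) z"
  by (induction zs arbitrary: t k) auto

lemma compress_snoc:
  "compress iota1 iota i (a, zs @ [z]) = iota (length zs + 2) i (compress iota1 iota i (a, zs)) z"
  by (simp add: compress_def kacc_snoc)

context
  fixes init :: "('x::finite \<times> ('i::finite \<Rightarrow> 'h::finite)) pmf"
    and W :: "nat \<Rightarrow> 'w::finite pmf"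
    and f :: "nat \<Rightarrow> 'x \<Rightarrow> ('i \<Rightarrow> 'u::finite) \<Rightarrow> 'w \<Rightarrow> 'x \<times> ('i \<Rightarrow> 'y::finite) \<times> ('i \<Rightarrow> real)"
    and U :: "nat \<Rightarrow> 'i \<Rightarrow> 'u set"
    and T :: nat
    and iota1 :: "'i \<Rightarrow> 'h \<Rightarrow> 'k::finite"
    and iota :: "nat \<Rightarrow> 'i \<Rightarrow> 'k \<Rightarrow> ('u \<times> 'y) \<Rightarrow> 'k"
begin

definition stage_outcome ::
  "nat \<Rightarrow> 'x \<Rightarrow> ('i \<Rightarrow> ('h,'u,'y) hist) \<Rightarrow> ('i \<Rightarrow> 'u) \<Rightarrow> 'w
   \<Rightarrow> 'x \<times> ('i \<Rightarrow> ('h,'u,'y) hist) \<times> ('i \<Rightarrow> real)" where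
  "stage_outcome t x h u w =
     (case f t x u w of (x', y, rr) \<Rightarrow> (x', (\<lambda>j. (fst (h j), snd (h j) @ [(u j, y j)])), rr))"

definition stage_kernel ::
  "('i \<Rightarrow> ('h,'u,'y) bstrat) \<Rightarrow> nat \<Rightarrow> 'x \<Rightarrow> ('i \<Rightarrow> ('h,'u,'y) hist)
   \<Rightarrow> ('x \<times> ('i \<Rightarrow> ('h,'u,'y) hist) \<times> ('i \<Rightarrow> real)) pmf" where
  "stage_kernel g t x h =
     bind_pmf (Pi_pmf UNIV undefined (\<lambda>j. g j t (h j))) (\<lambda>u. map_pmf (stage_outcome t x h u) (W t))"

lemma game_step_eq_stage_kernel:
  "game_step W f g t (x, h, r)
   = map_pmf (\<lambda>(x', h', rr). (x', h', \<lambda>j. r j + rr j)) (stage_kernel g t x h)"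
  unfolding game_step_def stage_kernel_def map_bind_pmf map_pmf_def bind_return_pmf bind_assoc_pmf prod.case
  by (intro bind_pmf_cong refl) (simp add: stage_outcome_def split: prod.split)

lemma finite_set_stage_kernel: "finite (set_pmf (stage_kernel g t x h))"
proof (rule finite_subset)
  show "set_pmf (stage_kernel g t x h) \<subseteq> range (\<lambda>(u, w). stage_outcome t x h u w)"
    by (force simp: stage_kernel_def image_iff)
qed simp

lemma finite_set_game_step: "finite (set_pmf (game_step W f g t s))"
  for g :: "'i \<Rightarrow> ('h,'u,'y) bstrat"
  by (cases s) (simp add: game_step_eq_stage_kernel finite_set_stage_kernel)

lemma finite_set_game_run: "finite (set_pmf (game_run init W f g n))"
  by (induction n) (simp_all add: finite_set_game_step)

lemma length_history_game_run:
  "(x, h, r) \<in> set_pmf (game_run init W f g n) \<Longrightarrow> length (snd (h j)) = n"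
proof (induction n arbitrary: x h r)
  case (Suc n)
  then obtain x0 h0 r0 where "(x0, h0, r0) \<in> set_pmf (game_run init W f g n)"
    and "(x, h, r) \<in> set_pmf (game_step W f g (Suc n) (x0, h0, r0))" by auto
  with Suc.IH show ?case
    by (auto simp: game_step_eq_stage_kernel stage_kernel_def stage_outcome_def split: prod.splits)
qed auto

definition kview :: "'i \<Rightarrow> 'x \<times> ('i \<Rightarrow> ('h,'u,'y) hist) \<Rightarrow> 'x \<times> ('i \<Rightarrow> ('h,'u,'y) hist) \<times> 'k" where
  "kview i s = (fst s, (snd s)(i := undefined), compress iota1 iota i (snd s i))"

definition kview_reward ::
  "'i \<Rightarrow> 'x \<times> ('i \<Rightarrow> ('h,'u,'y) hist) \<times> ('i \<Rightarrow> real)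
   \<Rightarrow> ('x \<times> ('i \<Rightarrow> ('h,'u,'y) hist) \<times> 'k) \<times> ('i \<Rightarrow> real)" where
  "kview_reward i s = (kview i (fst s, fst (snd s)), snd (snd s))"

definition kview_transition ::
  "('i \<Rightarrow> ('h,'u,'y) bstrat) \<Rightarrow> 'i \<Rightarrow> nat \<Rightarrow> 'x \<times> ('i \<Rightarrow> ('h,'u,'y) hist) \<times> 'k \<Rightarrow> 'u
   \<Rightarrow> (('x \<times> ('i \<Rightarrow> ('h,'u,'y) hist) \<times> 'k) \<times> ('i \<Rightarrow> real)) pmf" where
  "kview_transition g i t p a = (case p of (x, h, k) \<Rightarrow>
     bind_pmf (Pi_pmf (UNIV - {i}) undefined (\<lambda>j. g j t (h j))) (\<lambda>v. map_pmf (\<lambda>w.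
       case f t x (v(i := a)) w of (x', y, rr) \<Rightarrow>
         ((x', (\<lambda>j. (fst (h j), snd (h j) @ [(v j, y j)]))(i := undefined),
           iota (Suc t) i k (a, y i)), rr)) (W t)))"

lemma kview_transition_fun_upd [simp]: "kview_transition (g(i := s)) i = kview_transition g i"
proof -
  have "Pi_pmf (UNIV - {i}) undefined (\<lambda>j. (g(i := s)) j t (h j))
        = Pi_pmf (UNIV - {i}) undefined (\<lambda>j. g j t (h j))" for t h
    by (rule Pi_pmf_cong) auto
  then show ?thesis
    unfolding kview_transition_def by (simp only:)
qed

lemma stage_kernel_kview_reward:
  assumes "length (snd (h i)) = t - 1" and "1 \<le> t"
  shows "map_pmf (kview_reward i) (stage_kernel g t x h)
       = bind_pmf (g i t (h i)) (kview_transition g i t (kview i (x, h)))"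
proof -
  have Pi_split: "Pi_pmf UNIV undefined (\<lambda>j. g j t (h j))
     = bind_pmf (g i t (h i)) (\<lambda>a. map_pmf (\<lambda>v. v(i := a))
         (Pi_pmf (UNIV - {i}) undefined (\<lambda>j. g j t ((h(i := undefined)) j))))"
  proof -
    have "Pi_pmf (UNIV - {i}) undefined (\<lambda>j. g j t (h j))
          = Pi_pmf (UNIV - {i}) undefined (\<lambda>j. g j t ((h(i := undefined)) j))"
      by (rule Pi_pmf_cong) auto
    then show ?thesis
      using Pi_pmf_insert'[of "UNIV - {i}" i undefined "\<lambda>j. g j t (h j)"]
      by (simp add: insert_absorb map_pmf_def)
  qed
  have outcome: "kview_reward i (stage_outcome t x h (v(i := a)) w)
        = (case f t x (v(i := a)) w of (x', y, rr) \<Rightarrow>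
            ((x', (\<lambda>j. (fst ((h(i := undefined)) j), snd ((h(i := undefined)) j) @ [(v j, y j)]))(i := undefined),
              iota (Suc t) i (compress iota1 iota i (h i)) (a, y i)), rr))" for v a w
    using assms compress_snoc[of iota1 iota i "fst (h i)" "snd (h i)"]
    by (auto simp: kview_reward_def kview_def stage_outcome_def fun_eq_iff split: prod.split)
  have "map_pmf (kview_reward i) (stage_kernel g t x h)
        = bind_pmf (Pi_pmf UNIV undefined (\<lambda>j. g j t (h j)))
            (\<lambda>u. map_pmf (\<lambda>w. kview_reward i (stage_outcome t x h u w)) (W t))"
    by (simp add: stage_kernel_def map_bind_pmf pmf.map_comp o_def)
  also have "\<dots> = bind_pmf (g i t (h i)) (\<lambda>a.
      bind_pmf (Pi_pmf (UNIV - {i}) undefined (\<lambda>j. g j t ((h(i := undefined)) j)))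
        (\<lambda>v. map_pmf (\<lambda>w. kview_reward i (stage_outcome t x h (v(i := a)) w)) (W t)))"
    unfolding Pi_split by (simp only: bind_assoc_pmf bind_map_pmf)
  also have "\<dots> = bind_pmf (g i t (h i)) (kview_transition g i t (kview i (x, h)))"
    unfolding outcome kview_transition_def kview_def by simp
  finally show ?thesis .
qed

definition kview_dist ::
  "('i \<Rightarrow> ('h,'u,'y) bstrat) \<Rightarrow> 'i \<Rightarrow> nat \<Rightarrow> ('x \<times> ('i \<Rightarrow> ('h,'u,'y) hist) \<times> 'k) pmf" where
  "kview_dist g i n = map_pmf (\<lambda>(x, h, r). kview i (x, h)) (game_run init W f g n)"

text \<open>The law of ((X_{t+1}, H_{t+1}^{-i}, K_{t+1}^i), R_t).\<close>

definition stage_dist ::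
  "('i \<Rightarrow> ('h,'u,'y) bstrat) \<Rightarrow> 'i \<Rightarrow> nat
   \<Rightarrow> (('x \<times> ('i \<Rightarrow> ('h,'u,'y) hist) \<times> 'k) \<times> ('i \<Rightarrow> real)) pmf" where
  "stage_dist g i t =
     bind_pmf (game_run init W f g (t - 1)) (\<lambda>(x, h, r). map_pmf (kview_reward i) (stage_kernel g t x h))"

lemma stage_dist_eq:
  assumes "1 \<le> t"
  shows "stage_dist g i t = bind_pmf (game_run init W f g (t - 1))
           (\<lambda>(x, h, r). bind_pmf (g i t (h i)) (kview_transition g i t (kview i (x, h))))"
  unfolding stage_dist_def using assms
  by (intro bind_pmf_cong refl) (auto intro!: stage_kernel_kview_reward dest: length_history_game_run)

lemma kview_dist_Suc: "kview_dist g i (Suc n) = map_pmf fst (stage_dist g i (Suc n))"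
proof -
  have "map_pmf (\<lambda>(x, h, r). kview i (x, h)) (game_step W f g (Suc n) s)
        = map_pmf fst ((\<lambda>(x, h, r). map_pmf (kview_reward i) (stage_kernel g (Suc n) x h)) s)" for s
    by (cases s) (simp add: game_step_eq_stage_kernel pmf.map_comp o_def kview_reward_def case_prod_beta)
  then show ?thesis
    by (simp add: kview_dist_def stage_dist_def map_bind_pmf)
qed

lemma expected_reward_Suc:
  "measure_pmf.expectation (game_run init W f g (Suc n)) (\<lambda>(x, h, r). r j)
   = measure_pmf.expectation (game_run init W f g n) (\<lambda>(x, h, r). r j)
     + measure_pmf.expectation (stage_dist g i (Suc n)) (\<lambda>(p, rr). rr j)"
proof -
  let ?E = "measure_pmf.expectation"
  let ?run = "game_run init W f g n"
  define stage_reward :: "'x \<times> ('i \<Rightarrow> ('h,'u,'y) hist) \<times> ('i \<Rightarrow> real) \<Rightarrow> real"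
    where "stage_reward = (\<lambda>(x, h, r). ?E (stage_kernel g (Suc n) x h) (\<lambda>(x', h', rr). rr j))"
  have step: "?E (game_step W f g (Suc n) s) (\<lambda>(x, h, r). r j)
              = (case s of (x, h, r) \<Rightarrow> r j) + stage_reward s" for s
  proof (cases s)
    case (fields x h r)
    have "?E (game_step W f g (Suc n) s) (\<lambda>(x, h, r). r j)
          = ?E (stage_kernel g (Suc n) x h) (\<lambda>s'. r j + (case s' of (x', h', rr) \<Rightarrow> rr j))"
      by (simp add: fields game_step_eq_stage_kernel case_prod_beta)
    also have "\<dots> = r j + stage_reward s"
      by (subst Bochner_Integration.integral_add)
        (auto simp: fields stage_reward_def intro: integrable_measure_pmf_finite finite_set_stage_kernel)
    finally show ?thesis by (simp add: fields)
  qed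
  have "?E (game_run init W f g (Suc n)) (\<lambda>(x, h, r). r j)
        = ?E ?run (\<lambda>s. (case s of (x, h, r) \<Rightarrow> r j) + stage_reward s)"
    by (simp add: expectation_bind_pmf_finite finite_set_game_run finite_set_game_step step)
  also have "\<dots> = ?E ?run (\<lambda>(x, h, r). r j) + ?E ?run stage_reward"
    by (rule Bochner_Integration.integral_add) (auto intro: integrable_measure_pmf_finite finite_set_game_run)
  also have "?E ?run stage_reward = ?E (stage_dist g i (Suc n)) (\<lambda>(p, rr). rr j)"
    unfolding stage_dist_def stage_reward_def
    by (subst expectation_bind_pmf_finite)
      (auto simp: finite_set_game_run finite_set_stage_kernel kview_reward_def case_prod_beta')
  finally show ?thesis .
qed

definition averaged_strategy ::
  "(nat \<Rightarrow> 'k \<Rightarrow> ('h,'u,'y) hist pmf) \<Rightarrow> 'i \<Rightarrow> ('h,'u,'y) bstrat \<Rightarrow> ('h,'u,'y) bstrat" where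
  "averaged_strategy F i s t hh = bind_pmf (F t (compress iota1 iota i hh)) (s t)"

lemma stage_dist_averaged_strategy:
  assumes "1 \<le> t"
  shows "stage_dist (g(i := averaged_strategy F i s)) i t
       = bind_pmf (kview_dist (g(i := averaged_strategy F i s)) i (t - 1))
           (\<lambda>(x, h, k). bind_pmf (bind_pmf (F t k) (s t)) (kview_transition g i t (x, h, k)))"
  unfolding stage_dist_eq[OF assms] kview_dist_def bind_map_pmf
  by (intro bind_pmf_cong refl) (auto simp: averaged_strategy_def kview_def bind_assoc_pmf)

lemma stage_dist_conditionally_factorizes:
  assumes "1 \<le> t"
    and "conditionally_factorizes (state_dist init W f g t) (compress iota1 iota i) i undefined (F t) Phi"
  shows "stage_dist g i t
       = bind_pmf (kview_dist g i (t - 1))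
           (\<lambda>(x, h, k). bind_pmf (bind_pmf (F t k) (g i t)) (kview_transition g i t (x, h, k)))"
proof -
  have "stage_dist g i t = bind_pmf (state_dist init W f g t) (\<lambda>(x, h).
          bind_pmf (g i t (h i)) (kview_transition g i t (x, h(i := undefined), compress iota1 iota i (h i))))"
    unfolding stage_dist_eq[OF assms(1)] state_dist_def bind_map_pmf
    by (intro bind_pmf_cong refl) (auto simp: kview_def)
  also have "\<dots> = bind_pmf (state_dist init W f g t) (\<lambda>(x, h).
          bind_pmf (F t (compress iota1 iota i (h i))) (\<lambda>a.
            bind_pmf (g i t a) (kview_transition g i t (x, h(i := undefined), compress iota1 iota i (h i)))))"
    using bind_pmf_resample_component[OF assms(2),
        where \<Psi> = "\<lambda>(x, h) k a. bind_pmf (g i t a) (kview_transition g i t (x, h, k))"]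
    by simp
  also have "\<dots> = bind_pmf (kview_dist g i (t - 1))
           (\<lambda>(x, h, k). bind_pmf (bind_pmf (F t k) (g i t)) (kview_transition g i t (x, h, k)))"
    by (simp add: state_dist_def kview_dist_def bind_map_pmf bind_assoc_pmf case_prod_beta kview_def)
  finally show ?thesis .
qed

lemma averaged_strategy_preserves_kview_dist_and_rewards:
  assumes "\<forall>t\<in>{1..T}. conditionally_factorizes (state_dist init W f g t)
             (compress iota1 iota i) i undefined (F t) (Phi t)"
    and "g' = g(i := averaged_strategy F i (g i))"
    and "n \<le> T"
  shows "kview_dist g' i n = kview_dist g i n
    \<and> (\<forall>j. measure_pmf.expectation (game_run init W f g' n) (\<lambda>(x, h, r). r j)
          = measure_pmf.expectation (game_run init W f g n) (\<lambda>(x, h, r). r j))"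
  using \<open>n \<le> T\<close>
proof (induction n)
  case 0
  show ?case by (simp add: kview_dist_def)
next
  case (Suc n)
  then have IH: "kview_dist g' i n = kview_dist g i n"
    and IH_reward: "\<And>j. measure_pmf.expectation (game_run init W f g' n) (\<lambda>(x, h, r). r j)
          = measure_pmf.expectation (game_run init W f g n) (\<lambda>(x, h, r). r j)"
    by simp_all
  have "conditionally_factorizes (state_dist init W f g (Suc n))
          (compress iota1 iota i) i undefined (F (Suc n)) (Phi (Suc n))"
    using assms(1) Suc.prems by simp
  then have "stage_dist g' i (Suc n) = stage_dist g i (Suc n)"
    using stage_dist_averaged_strategy stage_dist_conditionally_factorizes IH assms(2) by simp
  with IH_reward show ?case
    by (simp only: kview_dist_Suc expected_reward_Suc[where i = i]) simp
qed

lemma payoff_averaged_strategy: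
  assumes "\<forall>t\<in>{1..T}. conditionally_factorizes (state_dist init W f g t)
             (compress iota1 iota i) i undefined (F t) (Phi t)"
  shows "payoff init W f T (g(i := averaged_strategy F i (g i))) j = payoff init W f T g j"
  using averaged_strategy_preserves_kview_dist_and_rewards[OF assms refl order_refl]
  by (simp add: payoff_def)

lemma valid_profile_kinduced:
  "valid_kprofile U T rho \<Longrightarrow> valid_profile U T (kinduced iota1 iota rho)"
  by (simp add: valid_kprofile_def valid_profile_def valid_strat_def kinduced_def)

definition usi_factorization ::
  "'i \<Rightarrow> (('h,'u,'y) bstrat \<Rightarrow> nat \<Rightarrow> 'k \<Rightarrow> ('h,'u,'y) hist pmf)
   \<Rightarrow> (('i \<Rightarrow> ('h,'u,'y) bstrat) \<Rightarrow> nat \<Rightarrow> 'k \<Rightarrow> ('x \<times> ('i \<Rightarrow> ('h,'u,'y) hist)) pmf) \<Rightarrow> bool" where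
  "usi_factorization i F Phi \<longleftrightarrow>
     (\<forall>g. valid_profile U T g \<longrightarrow> (\<forall>t\<in>{1..T}. conditionally_factorizes (state_dist init W f g t)
        (compress iota1 iota i) i undefined (F (g i) t) (Phi g t)))"

lemma USI_imp_usi_factorization:
  "USI init W f U T iota1 iota i \<Longrightarrow> \<exists>F Phi. usi_factorization i F Phi"
  unfolding USI_def usi_factorization_def conditionally_factorizes_def Let_def by blast

definition usi_kernel :: "'i \<Rightarrow> ('h,'u,'y) bstrat \<Rightarrow> nat \<Rightarrow> 'k \<Rightarrow> ('h,'u,'y) hist pmf" where
  "usi_kernel i = (SOME F. \<exists>Phi. usi_factorization i F Phi)"

lemma usi_kernel_factorizes:
  assumes "USI init W f U T iota1 iota i" and "valid_profile U T g"
  obtains Phi where "\<forall>t\<in>{1..T}. conditionally_factorizes (state_dist init W f g t)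
      (compress iota1 iota i) i undefined (usi_kernel i (g i) t) (Phi t)"
proof -
  have "\<exists>Phi. usi_factorization i (usi_kernel i) Phi"
    using USI_imp_usi_factorization[OF assms(1)] unfolding usi_kernel_def by (rule someI_ex)
  with assms(2) that show ?thesis
    unfolding usi_factorization_def by blast
qed

definition usi_kprofile :: "('i \<Rightarrow> ('h,'u,'y) bstrat) \<Rightarrow> 'i \<Rightarrow> nat \<Rightarrow> 'k \<Rightarrow> 'u pmf" where
  "usi_kprofile g j t k = bind_pmf (usi_kernel j (g j) t k) (g j t)"

lemma usi_kprofile_cong: "g j = g' j \<Longrightarrow> usi_kprofile g j = usi_kprofile g' j"
  by (intro ext) (simp add: usi_kprofile_def)

lemma valid_kprofile_usi_kprofile:
  "valid_profile U T g \<Longrightarrow> valid_kprofile U T (usi_kprofile g)"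
  by (fastforce simp: valid_profile_def valid_strat_def valid_kprofile_def usi_kprofile_def)

lemma payoff_replace_by_usi_kprofile:
  assumes "USI init W f U T iota1 iota i" and "valid_profile U T g"
  shows "payoff init W f T (g(i := kinduced iota1 iota (usi_kprofile g) i)) j = payoff init W f T g j"
proof -
  obtain Phi where "\<forall>t\<in>{1..T}. conditionally_factorizes (state_dist init W f g t)
      (compress iota1 iota i) i undefined (usi_kernel i (g i) t) (Phi t)"
    using usi_kernel_factorizes[OF assms] .
  moreover have "kinduced iota1 iota (usi_kprofile g) i = averaged_strategy (usi_kernel i (g i)) i (g i)"
    by (simp add: fun_eq_iff kinduced_def usi_kprofile_def averaged_strategy_def)
  ultimately show ?thesis
    by (simp add: payoff_averaged_strategy)
qed

lemma payoff_replace_set_by_usi_kprofile: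
  assumes "\<forall>i. USI init W f U T iota1 iota i" and "valid_profile U T g"
  shows "payoff init W f T (\<lambda>j. if j \<in> S then kinduced iota1 iota (usi_kprofile g) j else g j) m
       = payoff init W f T g m"
  using finite[of S]
proof (induction S rule: finite_induct)
  case (insert a S)
  define q where "q = (\<lambda>j. if j \<in> S then kinduced iota1 iota (usi_kprofile g) j else g j)"
  have "valid_profile U T q"
    using assms(2) valid_profile_kinduced[OF valid_kprofile_usi_kprofile[OF assms(2)]]
    by (simp add: q_def valid_profile_def)
  have "usi_kprofile q a = usi_kprofile g a"
    using insert.hyps by (intro usi_kprofile_cong) (simp add: q_def)
  then have "(\<lambda>j. if j \<in> insert a S then kinduced iota1 iota (usi_kprofile g) j else g j)
           = q(a := kinduced iota1 iota (usi_kprofile q) a)"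
    by (auto simp: q_def fun_eq_iff kinduced_def)
  then have "payoff init W f T
        (\<lambda>j. if j \<in> insert a S then kinduced iota1 iota (usi_kprofile g) j else g j) m
      = payoff init W f T q m"
    using payoff_replace_by_usi_kprofile[OF assms(1)[rule_format] \<open>valid_profile U T q\<close>] by simp
  also have "\<dots> = payoff init W f T g m"
    using insert.IH by (simp add: q_def)
  finally show ?case .
qed simp

lemma payoff_kinduced_usi_kprofile:
  assumes "\<forall>i. USI init W f U T iota1 iota i" and "valid_profile U T g"
  shows "payoff init W f T (kinduced iota1 iota (usi_kprofile g)) m = payoff init W f T g m"
  using payoff_replace_set_by_usi_kprofile[OF assms, of UNIV] by (simp add: fun_eq_iff)

lemma is_BNE_kinduced_usi_kprofile:
  assumes usi: "\<forall>i. USI init W f U T iota1 iota i" and "is_BNE init W f U T g"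
  shows "is_BNE init W f U T (kinduced iota1 iota (usi_kprofile g))"
  unfolding is_BNE_def
proof (intro conjI allI impI)
  have valid: "valid_profile U T g"
    using assms(2) by (simp add: is_BNE_def)
  then show "valid_profile U T (kinduced iota1 iota (usi_kprofile g))"
    by (intro valid_profile_kinduced valid_kprofile_usi_kprofile)
  fix i and s :: "('h,'u,'y) bstrat"
  assume "valid_strat U T i s"
  then have "valid_profile U T (g(i := s))"
    using valid by (simp add: valid_profile_def)
  moreover have "(kinduced iota1 iota (usi_kprofile g))(i := s)
      = (\<lambda>j. if j \<in> - {i} then kinduced iota1 iota (usi_kprofile (g(i := s))) j else (g(i := s)) j)"
    by (auto simp: fun_eq_iff kinduced_def usi_kprofile_def)
  ultimately have "payoff init W f T ((kinduced iota1 iota (usi_kprofile g))(i := s)) i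
      = payoff init W f T (g(i := s)) i"
    using payoff_replace_set_by_usi_kprofile[OF usi, of "g(i := s)" "- {i}" i] by simp
  also have "\<dots> \<le> payoff init W f T g i"
    using assms(2) \<open>valid_strat U T i s\<close> by (simp add: is_BNE_def)
  also have "\<dots> = payoff init W f T (kinduced iota1 iota (usi_kprofile g)) i"
    using payoff_kinduced_usi_kprofile[OF usi valid] by simp
  finally show "payoff init W f T ((kinduced iota1 iota (usi_kprofile g))(i := s)) i
      \<le> payoff init W f T (kinduced iota1 iota (usi_kprofile g)) i" .
qed

end

theorem theorem2:
  fixes init :: "('x::finite \<times> ('i::finite \<Rightarrow> 'h::finite)) pmf"
    and W :: "nat \<Rightarrow> 'w::finite pmf"
    and f :: "nat \<Rightarrow> 'x \<Rightarrow> ('i \<Rightarrow> 'u::finite) \<Rightarrow> 'w \<Rightarrow> 'x \<times> ('i \<Rightarrow> 'y::finite) \<times> ('i \<Rightarrow> real)"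
    and U :: "nat \<Rightarrow> 'i \<Rightarrow> 'u set"
    and T :: nat
    and iota1 :: "'i \<Rightarrow> 'h \<Rightarrow> 'k::finite"
    and iota :: "nat \<Rightarrow> 'i \<Rightarrow> 'k \<Rightarrow> ('u \<times> 'y) \<Rightarrow> 'k"
  assumes rewards: "\<forall>t\<in>{1..T}. \<forall>x u w i. \<bar>snd (snd (f t x u w)) i\<bar> \<le> 1"
    and usi: "\<forall>i. USI init W f U T iota1 iota i"
  shows "{(\<lambda>i. payoff init W f T (kinduced iota1 iota rho) i) | rho.
            valid_kprofile U T rho \<and> is_BNE init W f U T (kinduced iota1 iota rho)}
       = {(\<lambda>i. payoff init W f T g i) | g. is_BNE init W f U T g}"
proof (intro equalityI subsetI)
  fix v
  assume "v \<in> {(\<lambda>i. payoff init W f T g i) | g. is_BNE init W f U T g}"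
  then obtain g where v: "v = (\<lambda>i. payoff init W f T g i)" and bne: "is_BNE init W f U T g"
    by blast
  have valid: "valid_profile U T g"
    using bne by (simp add: is_BNE_def)
  let ?rho = "usi_kprofile init W f U T iota1 iota g"
  have "v = (\<lambda>i. payoff init W f T (kinduced iota1 iota ?rho) i)"
    using payoff_kinduced_usi_kprofile[OF usi valid] v by simp
  moreover have "valid_kprofile U T ?rho"
    using valid by (rule valid_kprofile_usi_kprofile)
  moreover have "is_BNE init W f U T (kinduced iota1 iota ?rho)"
    using usi bne by (rule is_BNE_kinduced_usi_kprofile)
  ultimately show "v \<in> {(\<lambda>i. payoff init W f T (kinduced iota1 iota rho) i) | rho.
            valid_kprofile U T rho \<and> is_BNE init W f U T (kinduced iota1 iota rho)}"
    by blast
qed blast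

end
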